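(* Let $\phi:M_D(\mathbb{C})\to M_D(\mathbb{C})$ be a primitive unital Schwarz map and let $\varrho$ be the Perron–Frobenius eigenvector of $\phi^*$. Then for every $n\in\mathbb{N}$, $$\mathcal{M}_{\phi^n}=\{a\in M_D(\mathbb{C}) : \langle a,a\rangle_\varrho=\langle \phi^n(a),\phi^n(a)\rangle_\varrho \text{ and } \langle a^*,a^*\rangle_\varrho=\langle \phi^n(a)^*,\phi^n(a)^*\rangle_\varrho\}.$$
   Context: $M_D(\mathbb{C})$ is the algebra of complex $D\times D$ matrices. A linear map $\phi$ is a unital Schwarz map if $\phi(I)=I$ and $\phi(a^*a)\ge\phi(a)^*\phi(a)$ for all $a$; it is primitive if some power $\phi^n$ maps every nonzero positive semidefinite matrix to a positive definite matrix. $\phi^*$ denotes the adjoint of $\phi$ with respect to the Hilbert–Schmidt inner product $\langle a,b\rangle=\mathrm{Tr}(a^*b)$. The Perron–Frobenius eigenvector of $\phi^*$ is the unique positive definite $\varrho$ with $\mathrm{Tr}(\varrho)=1$ and $\phi^*(\varrho)=r\varrho$, $r$ the spectral radius (here $r=1$, so $\phi^*(\varrho)=\varrho$). For positive definite $z$, $\langle a,b\rangle_z:=\mathrm{Tr}(z a^*b)$. For a unital Schwarz map $\psi$, the multiplicative domain is $\mathcal{M}_\psi=\{a : \psi(a^*a)=\psi(a)^*\psi(a) \text{ and } \psi(aa^* )=\psi(a)\psi(a)^*\}$. *)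

theory Defs
  imports "HOL-Analysis.Analysis"
begin

text \<open>Complex D x D matrices are modelled as complex^'n^'n, with D = CARD('n).\<close>

type_synonym 'n cmat = "complex^'n^'n"

definition cadj :: "'n::finite cmat \<Rightarrow> 'n cmat" where
  "cadj A = (\<chi> i j. cnj (A $ j $ i))"

definition csmult :: "complex \<Rightarrow> 'n::finite cmat \<Rightarrow> 'n cmat" where
  "csmult c A = (\<chi> i j. c * A $ i $ j)"

definition clinear_map :: "('n::finite cmat \<Rightarrow> 'n cmat) \<Rightarrow> bool" where
  "clinear_map f \<longleftrightarrow> (\<forall>a b. f (a + b) = f a + f b) \<and> (\<forall>c a. f (csmult c a) = csmult c (f a))"

definition qform :: "'n::finite cmat \<Rightarrow> complex^'n \<Rightarrow> complex" where
  "qform A v = (\<Sum>i\<in>UNIV. cnj (v $ i) * (A *v v) $ i)"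

definition psd :: "'n::finite cmat \<Rightarrow> bool" where
  "psd A \<longleftrightarrow> (\<forall>v. Im (qform A v) = 0 \<and> Re (qform A v) \<ge> 0)"

definition pd :: "'n::finite cmat \<Rightarrow> bool" where
  "pd A \<longleftrightarrow> (\<forall>v. v \<noteq> 0 \<longrightarrow> Im (qform A v) = 0 \<and> Re (qform A v) > 0)"

definition loewner_ge :: "'n::finite cmat \<Rightarrow> 'n cmat \<Rightarrow> bool" where
  "loewner_ge A B \<longleftrightarrow> psd (A - B)"

definition unital_schwarz :: "('n::finite cmat \<Rightarrow> 'n cmat) \<Rightarrow> bool" where
  "unital_schwarz f \<longleftrightarrow> clinear_map f \<and> f (mat 1) = mat 1 \<and>
     (\<forall>a. loewner_ge (f (cadj a ** a)) (cadj (f a) ** f a))"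

definition primitive_map :: "('n::finite cmat \<Rightarrow> 'n cmat) \<Rightarrow> bool" where
  "primitive_map f \<longleftrightarrow> (\<exists>n. \<forall>a. psd a \<and> a \<noteq> 0 \<longrightarrow> pd ((f ^^ n) a))"

definition hs_inner :: "'n::finite cmat \<Rightarrow> 'n cmat \<Rightarrow> complex" where
  "hs_inner a b = trace (cadj a ** b)"

definition hs_adjoint :: "('n::finite cmat \<Rightarrow> 'n cmat) \<Rightarrow> ('n cmat \<Rightarrow> 'n cmat)" where
  "hs_adjoint f = (THE g. \<forall>a b. hs_inner a (f b) = hs_inner (g a) b)"

definition winner :: "'n::finite cmat \<Rightarrow> 'n cmat \<Rightarrow> 'n cmat \<Rightarrow> complex" where
  "winner z a b = trace (z ** cadj a ** b)"

definition mult_domain :: "('n::finite cmat \<Rightarrow> 'n cmat) \<Rightarrow> 'n cmat set" where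
  "mult_domain g = {a. g (cadj a ** a) = cadj (g a) ** g a \<and> g (a ** cadj a) = g a ** cadj (g a)}"

end

theory Submission
  imports Defs "HOL-Library.Complex_Order"
begin

(*
  Along the orbit b_k = \<phi>^k(a) the Schwarz defects
  D_k = \<phi>(b_k\<^sup>* b_k) - \<phi>(b_k)\<^sup>* \<phi>(b_k) are positive semidefinite, and since
  \<phi>\<^sup>*(\<rho>) = \<rho> the functional x \<mapsto> Tr(\<rho> x) is \<phi>-invariant; hence
  Tr(\<rho> a\<^sup>* a) - Tr(\<rho> b_n\<^sup>* b_n) telescopes to the sum of the Tr(\<rho> D_k), k < n.
  For \<rho> positive definite and D positive semidefinite, Tr(\<rho> D) \<ge> 0 with equality only
  if D = 0 (by induction on the index set, splitting off one index of \<rho> through its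
  Schur complement). So equality of the \<rho>-norms of a and \<phi>^n(a) kills every defect,
  which gives \<phi>^n(a\<^sup>* a) = \<phi>^n(a)\<^sup>* \<phi>^n(a); the same for a\<^sup>*, using that Schwarz
  maps commute with the adjoint, gives the other half of the multiplicative domain.
*)

section \<open>Positive forms on finite index sets\<close>

text \<open>Matrices are taken as functions on a finite index set so that positivity can be proved
  by induction on that set. The order on complex numbers is the one of
  HOL-Library.Complex_Order: 0 \<le> z means that z is real and nonnegative.\<close>

definition quad_form :: "('a \<Rightarrow> 'a \<Rightarrow> complex) \<Rightarrow> 'a set \<Rightarrow> ('a \<Rightarrow> complex) \<Rightarrow> complex" where
  "quad_form A I v = (\<Sum>i\<in>I. \<Sum>j\<in>I. cnj (v i) * A i j * v j)"

definition psd_on :: "'a set \<Rightarrow> ('a \<Rightarrow> 'a \<Rightarrow> complex) \<Rightarrow> bool" where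
  "psd_on I A \<longleftrightarrow> (\<forall>v. 0 \<le> quad_form A I v)"

definition pd_on :: "'a set \<Rightarrow> ('a \<Rightarrow> 'a \<Rightarrow> complex) \<Rightarrow> bool" where
  "pd_on I A \<longleftrightarrow> (\<forall>v. (\<exists>i\<in>I. v i \<noteq> 0) \<longrightarrow> 0 < quad_form A I v)"

definition trace_prod :: "('a \<Rightarrow> 'a \<Rightarrow> complex) \<Rightarrow> ('a \<Rightarrow> 'a \<Rightarrow> complex) \<Rightarrow> 'a set \<Rightarrow> complex" where
  "trace_prod r x I = (\<Sum>i\<in>I. \<Sum>j\<in>I. r i j * x j i)"

definition schur_compl :: "('a \<Rightarrow> 'a \<Rightarrow> complex) \<Rightarrow> 'a \<Rightarrow> 'a \<Rightarrow> 'a \<Rightarrow> complex" where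
  "schur_compl r k = (\<lambda>i j. r i j - r i k * r k j / r k k)"

lemma psd_onD: "psd_on I A \<Longrightarrow> 0 \<le> quad_form A I v"
  unfolding psd_on_def by blast

lemma pd_onD: "pd_on I A \<Longrightarrow> i \<in> I \<Longrightarrow> v i \<noteq> 0 \<Longrightarrow> 0 < quad_form A I v"
  unfolding pd_on_def by blast

lemma quad_form_cong: "(\<And>i. i \<in> I \<Longrightarrow> v i = w i) \<Longrightarrow> quad_form A I v = quad_form A I w"
  unfolding quad_form_def by simp

lemma quad_form_mono_neutral:
  assumes "finite I" "K \<subseteq> I" "\<And>i. i \<in> I - K \<Longrightarrow> v i = 0"
  shows "quad_form A I v = quad_form A K v"
proof -
  have "quad_form A I v = (\<Sum>i\<in>K. \<Sum>j\<in>I. cnj (v i) * A i j * v j)"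
    unfolding quad_form_def by (rule sum.mono_neutral_right) (use assms in auto)
  also have "\<dots> = quad_form A K v"
    unfolding quad_form_def
    by (intro sum.cong refl sum.mono_neutral_right) (use assms in auto)
  finally show ?thesis .
qed

lemma quad_form_singleton: "quad_form A {i} v = cnj (v i) * A i i * v i"
  unfolding quad_form_def by simp

lemma quad_form_doubleton:
  "i \<noteq> j \<Longrightarrow> quad_form A {i, j} v =
     cnj (v i) * A i i * v i + cnj (v i) * A i j * v j + cnj (v j) * A j i * v i + cnj (v j) * A j j * v j"
  unfolding quad_form_def by (simp add: algebra_simps)

lemma quad_form_insert:
  assumes "finite J" "k \<notin> J"
  shows "quad_form A (insert k J) v = cnj (v k) * A k k * v k + (\<Sum>j\<in>J. cnj (v k) * A k j * v j)
     + (\<Sum>i\<in>J. cnj (v i) * A i k * v k) + quad_form A J v"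
  using assms unfolding quad_form_def by (simp add: sum.distrib algebra_simps)

lemma trace_prod_insert:
  assumes "finite J" "k \<notin> J"
  shows "trace_prod r x (insert k J) = r k k * x k k + (\<Sum>j\<in>J. r k j * x j k)
     + (\<Sum>i\<in>J. r i k * x k i) + trace_prod r x J"
  using assms unfolding trace_prod_def by (simp add: sum.distrib algebra_simps)

lemma quad_form_unit_vector:
  assumes "finite I" "i \<in> I"
  shows "quad_form A I (\<lambda>j. if j = i then 1 else 0) = A i i"
  using quad_form_mono_neutral[of I "{i}"] assms by (simp add: quad_form_singleton)

lemma quad_form_two_vector:
  assumes "finite I" "i \<in> I" "j \<in> I" "i \<noteq> j"
  shows "quad_form A I (\<lambda>l. if l = i then a else if l = j then b else 0) =
     cnj a * A i i * a + cnj a * A i j * b + cnj b * A j i * a + cnj b * A j j * b"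
  using quad_form_mono_neutral[of I "{i, j}"] assms by (simp add: quad_form_doubleton)

lemma pd_on_imp_psd_on:
  assumes "pd_on I A"
  shows "psd_on I A"
  unfolding psd_on_def
proof
  fix v
  show "0 \<le> quad_form A I v"
  proof (cases "\<exists>i\<in>I. v i \<noteq> 0")
    case True
    then show ?thesis using pd_onD[OF assms] by (blast intro: less_imp_le)
  next
    case False
    then show ?thesis by (simp add: quad_form_def)
  qed
qed

lemma pd_on_diag_pos:
  assumes "finite I" "pd_on I A" "i \<in> I"
  shows "0 < A i i"
  using pd_onD[OF assms(2,3), of "\<lambda>j. if j = i then 1 else 0"] quad_form_unit_vector[OF assms(1,3)]
  by simp

lemma psd_on_subset:
  assumes "finite I" "J \<subseteq> I" "psd_on I A"
  shows "psd_on J A"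
  unfolding psd_on_def
proof
  fix v
  have "quad_form A J v = quad_form A J (\<lambda>i. if i \<in> J then v i else 0)"
    by (rule quad_form_cong) simp
  also have "\<dots> = quad_form A I (\<lambda>i. if i \<in> J then v i else 0)"
    by (rule quad_form_mono_neutral[symmetric]) (use assms in auto)
  finally show "0 \<le> quad_form A J v"
    using psd_onD[OF assms(3)] by simp
qed

lemma affine_nonneg_imp_slope_eq_0:
  fixes z c :: complex
  assumes "\<And>s::real. 0 \<le> of_real s * z + c"
  shows "z = 0"
proof -
  have "Im c = 0" and "Im z + Im c = 0"
    using assms[of 0] assms[of 1] by (simp_all add: less_eq_complex_def)
  moreover have "Re z = 0"
  proof (rule ccontr)
    assume "Re z \<noteq> 0"
    then have "Re (of_real (- (Re c + 1) / Re z) * z + c) = -1"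
      by (simp add: field_simps)
    moreover have "0 \<le> Re (of_real (- (Re c + 1) / Re z) * z + c)"
      using assms[of "- (Re c + 1) / Re z"] by (simp only: less_eq_complex_def zero_complex.sel)
    ultimately show False by simp
  qed
  ultimately show ?thesis by (simp add: complex_eq_iff)
qed

lemma psd_on_hermitian:
  assumes "finite I" "psd_on I A" "i \<in> I" "j \<in> I"
  shows "A j i = cnj (A i j)"
proof -
  note nonneg = psd_onD[OF assms(2)]
  have diag_real: "Im (A l l) = 0" if "l \<in> I" for l
    using nonneg[of "\<lambda>m. if m = l then 1 else 0"] quad_form_unit_vector[OF assms(1) that]
    by (simp add: less_eq_complex_def)
  show ?thesis
  proof (cases "i = j")
    case True
    then show ?thesis using diag_real[OF assms(3)] by (simp add: complex_eq_iff)
  next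
    case False
    note two = quad_form_two_vector[OF assms(1,3,4) False, of A]
    have "Im (A i i + A i j + A j i + A j j) = 0"
      using nonneg[of "\<lambda>l. if l = i then 1 else if l = j then 1 else 0"] two
      by (simp add: less_eq_complex_def)
    then have im: "Im (A i j + A j i) = 0" using diag_real assms(3,4) by simp
    have "Im (A i i - \<i> * A i j + \<i> * A j i + A j j) = 0"
      using nonneg[of "\<lambda>l. if l = i then \<i> else if l = j then 1 else 0"] two
      by (simp add: less_eq_complex_def algebra_simps)
    then have re: "Re (A j i - A i j) = 0" using diag_real assms(3,4) by simp
    show ?thesis using im re by (simp add: complex_eq_iff)
  qed
qed

lemma psd_on_zero_diag_imp_zero:
  assumes "finite I" "psd_on I x" "i \<in> I" "j \<in> I" "x i i = 0"
  shows "x i j = 0 \<and> x j i = 0"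
proof (cases "i = j")
  case True
  then show ?thesis using assms by simp
next
  case False
  note nonneg = psd_onD[OF assms(2)]
  note two = quad_form_two_vector[OF assms(1,3,4) False, of x]
  have "0 \<le> of_real s * (x i j + x j i) + x j j" for s :: real
    using nonneg[of "\<lambda>l. if l = i then of_real s else if l = j then 1 else 0"] two assms(5)
    by (simp add: algebra_simps)
  then have sum: "x i j + x j i = 0" by (rule affine_nonneg_imp_slope_eq_0)
  have "0 \<le> of_real s * (\<i> * (x j i - x i j)) + x j j" for s :: real
    using nonneg[of "\<lambda>l. if l = i then \<i> * of_real s else if l = j then 1 else 0"] two assms(5)
    by (simp add: algebra_simps)
  then have "\<i> * (x j i - x i j) = 0" by (rule affine_nonneg_imp_slope_eq_0)
  with sum show ?thesis by simp
qed

text \<open>Completing the square in the k-th coordinate.\<close>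

lemma quad_form_schur_compl:
  assumes "finite J" "k \<notin> J" "r k k \<noteq> 0"
  shows "quad_form (schur_compl r k) J v =
    quad_form r (insert k J) (v(k := - (\<Sum>j\<in>J. r k j * v j) / r k k))"
proof -
  define \<beta> where "\<beta> = (\<Sum>j\<in>J. r k j * v j)"
  define \<gamma> where "\<gamma> = (\<Sum>i\<in>J. cnj (v i) * r i k)"
  have expand: "quad_form r (insert k J) (v(k := c)) = cnj c * (r k k * c + \<beta>) + \<gamma> * c + quad_form r J v"
    for c
  proof -
    have "\<And>j. j \<in> J \<Longrightarrow> (v(k := c)) j = v j" "quad_form r J (v(k := c)) = quad_form r J v"
      using assms(2) by (auto intro: quad_form_cong)
    then show ?thesis
      unfolding quad_form_insert[OF assms(1,2)] \<beta>_def \<gamma>_def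
      by (simp add: sum_distrib_left sum_distrib_right algebra_simps)
  qed
  have "quad_form r (insert k J) (v(k := - \<beta> / r k k)) = quad_form r J v - \<gamma> * \<beta> / r k k"
    unfolding expand using assms(3) by simp
  also have "\<gamma> * \<beta> = (\<Sum>i\<in>J. \<Sum>j\<in>J. (cnj (v i) * r i k) * (r k j * v j))"
    by (simp add: \<gamma>_def \<beta>_def sum_product)
  also have "quad_form r J v - \<dots> / r k k = quad_form (schur_compl r k) J v"
    unfolding quad_form_def schur_compl_def
    by (simp add: sum_subtractf sum_divide_distrib algebra_simps)
  finally show ?thesis unfolding \<beta>_def by (rule sym)
qed

lemma pd_on_schur_compl:
  assumes "finite J" "k \<notin> J" and pd: "pd_on (insert k J) r"
  shows "pd_on J (schur_compl r k)"
  unfolding pd_on_def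
proof (intro allI impI)
  fix v :: "'a \<Rightarrow> complex"
  assume "\<exists>i\<in>J. v i \<noteq> 0"
  then obtain i where "i \<in> J" "v i \<noteq> 0" by blast
  define w where "w = v(k := - (\<Sum>j\<in>J. r k j * v j) / r k k)"
  have "w i \<noteq> 0"
    using \<open>i \<in> J\<close> \<open>v i \<noteq> 0\<close> assms(2) by (auto simp: w_def)
  then have pos: "0 < quad_form r (insert k J) w"
    using pd_onD[OF pd] \<open>i \<in> J\<close> by blast
  have "r k k \<noteq> 0"
    using pd_on_diag_pos[OF _ pd, of k] assms(1) by auto
  from quad_form_schur_compl[of J k r v, OF assms(1,2) this] pos
  show "0 < quad_form (schur_compl r k) J v"
    unfolding w_def by simp
qed

lemma trace_prod_schur_compl:
  assumes "finite J" "k \<notin> J" "r k k \<noteq> 0"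
    and herm: "\<And>i j. i \<in> insert k J \<Longrightarrow> j \<in> insert k J \<Longrightarrow> r j i = cnj (r i j)"
  shows "trace_prod r x (insert k J) =
    r k k * quad_form x (insert k J) (\<lambda>c. if c = k then 1 else r c k / r k k)
    + trace_prod (schur_compl r k) x J"
proof -
  define \<alpha> where "\<alpha> = r k k"
  define u where "u = (\<lambda>c. if c = k then 1 else r c k / \<alpha>)"
  have \<alpha>_real: "cnj \<alpha> = \<alpha>"
    using herm[of k k] unfolding \<alpha>_def by simp
  have u_J: "u c = r c k / \<alpha>" "cnj (u c) = r k c / \<alpha>" if "c \<in> J" for c
    using that assms(2) herm[of c k] \<alpha>_real by (auto simp: u_def)
  have "\<alpha> * quad_form x (insert k J) u
      = \<alpha> * x k k + (\<Sum>j\<in>J. r j k * x k j) + (\<Sum>i\<in>J. r k i * x i k) + \<alpha> * quad_form x J u"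
    unfolding quad_form_insert[OF assms(1,2)] using u_J assms(3)
    by (simp add: u_def sum_distrib_left distrib_left \<alpha>_def mult.commute)
  moreover have "\<alpha> * quad_form x J u = (\<Sum>i\<in>J. \<Sum>j\<in>J. r i k * r k j * x j i) / \<alpha>"
  proof -
    have "\<alpha> * quad_form x J u = (\<Sum>c\<in>J. \<Sum>d\<in>J. r k c * x c d * r d k / \<alpha>)"
      unfolding quad_form_def using u_J assms(3) by (simp add: sum_distrib_left \<alpha>_def)
    also have "\<dots> = (\<Sum>d\<in>J. \<Sum>c\<in>J. r d k * r k c * x c d) / \<alpha>"
      by (subst sum.swap) (simp add: sum_divide_distrib mult.commute mult.left_commute)
    finally show ?thesis by simp
  qed
  moreover have "trace_prod r x J
      = trace_prod (schur_compl r k) x J + (\<Sum>i\<in>J. \<Sum>j\<in>J. r i k * r k j * x j i) / \<alpha>"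
    unfolding trace_prod_def schur_compl_def \<alpha>_def
    by (simp add: left_diff_distrib sum_subtractf sum_divide_distrib)
  ultimately show ?thesis
    unfolding trace_prod_insert[OF assms(1,2)] u_def[symmetric] \<alpha>_def[symmetric]
    by (simp add: algebra_simps)
qed

lemma trace_prod_pd_psd_nonneg_and_zero_diag:
  assumes "finite I" "pd_on I r" "psd_on I x"
  shows "0 \<le> trace_prod r x I \<and> (trace_prod r x I = 0 \<longrightarrow> (\<forall>i\<in>I. x i i = 0))"
  using assms
proof (induction I arbitrary: r rule: finite_induct)
  case empty
  then show ?case by (simp add: trace_prod_def)
next
  case (insert k J)
  have fin: "finite (insert k J)" using insert.hyps(1) by simp
  have herm: "r j i = cnj (r i j)" if "i \<in> insert k J" "j \<in> insert k J" for i j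
    using psd_on_hermitian[OF fin pd_on_imp_psd_on[OF insert.prems(1)] that] .
  have rkk: "0 < r k k"
    using pd_on_diag_pos[OF fin insert.prems(1)] by simp
  then have rkk0: "r k k \<noteq> 0" by (rule less_imp_neq[symmetric])
  define u where "u = (\<lambda>c. if c = k then 1 else r c k / r k k)"
  have dec: "trace_prod r x (insert k J) =
      r k k * quad_form x (insert k J) u + trace_prod (schur_compl r k) x J"
    unfolding u_def using rkk0 by (intro trace_prod_schur_compl insert.hyps herm)
  have head: "0 \<le> r k k * quad_form x (insert k J) u"
    using rkk psd_onD[OF insert.prems(2)] by simp
  have tail: "0 \<le> trace_prod (schur_compl r k) x J \<and>
      (trace_prod (schur_compl r k) x J = 0 \<longrightarrow> (\<forall>i\<in>J. x i i = 0))"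
    using insert.IH pd_on_schur_compl[OF insert.hyps insert.prems(1)]
      psd_on_subset[OF fin _ insert.prems(2)] by blast
  show ?case
  proof (intro conjI impI)
    show "0 \<le> trace_prod r x (insert k J)"
      unfolding dec using head tail by simp
    assume "trace_prod r x (insert k J) = 0"
    then have "r k k * quad_form x (insert k J) u = 0" "trace_prod (schur_compl r k) x J = 0"
      using add_nonneg_eq_0_iff[OF head tail[THEN conjunct1]] unfolding dec by blast+
    then have head0: "quad_form x (insert k J) u = 0" and diag_J: "\<forall>i\<in>J. x i i = 0"
      using rkk0 tail by simp_all
    have off_diag: "x i j = 0" "x j i = 0" if "i \<in> J" "j \<in> insert k J" for i j
      using psd_on_zero_diag_imp_zero[OF fin insert.prems(2), of i j] diag_J that by auto
    have "quad_form x (insert k J) u = x k k"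
      unfolding quad_form_insert[OF insert.hyps] by (simp add: u_def quad_form_def off_diag)
    with head0 diag_J show "\<forall>i\<in>insert k J. x i i = 0" by simp
  qed
qed

lemma qform_eq_quad_form: "qform A v = quad_form (\<lambda>i j. A $ i $ j) UNIV (\<lambda>i. v $ i)"
  unfolding qform_def quad_form_def matrix_vector_mult_def
  by (simp add: sum_distrib_left mult.assoc)

lemma psd_imp_psd_on:
  assumes "psd A"
  shows "psd_on UNIV (\<lambda>i j. A $ i $ j)"
  unfolding psd_on_def
proof
  fix v :: "'a \<Rightarrow> complex"
  have "0 \<le> qform A (\<chi> i. v i)"
    using assms unfolding psd_def less_eq_complex_def by simp
  then show "0 \<le> quad_form (\<lambda>i j. A $ i $ j) UNIV v"
    by (simp add: qform_eq_quad_form)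
qed

lemma pd_imp_pd_on:
  assumes "pd A"
  shows "pd_on UNIV (\<lambda>i j. A $ i $ j)"
  unfolding pd_on_def
proof (intro allI impI)
  fix v :: "'a \<Rightarrow> complex"
  assume "\<exists>i\<in>UNIV. v i \<noteq> 0"
  then have "(\<chi> i. v i) \<noteq> 0"
    by (simp add: vec_eq_iff)
  then have "0 < qform A (\<chi> i. v i)"
    using assms unfolding pd_def less_complex_def by simp
  then show "0 < quad_form (\<lambda>i j. A $ i $ j) UNIV v"
    by (simp add: qform_eq_quad_form)
qed

lemma psd_on_entries_imp_hermitian:
  assumes "psd_on UNIV (\<lambda>i j. A $ i $ j)"
  shows "cadj A = A"
proof -
  have "cnj (A $ i $ j) = A $ j $ i" for i j
    using psd_on_hermitian[OF finite_class.finite_UNIV assms UNIV_I UNIV_I, of j i] by simp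
  then show ?thesis by (simp add: cadj_def vec_eq_iff)
qed

lemma psd_hermitian: "psd A \<Longrightarrow> cadj A = A"
  by (rule psd_on_entries_imp_hermitian[OF psd_imp_psd_on])

lemma pd_hermitian: "pd A \<Longrightarrow> cadj A = A"
  by (rule psd_on_entries_imp_hermitian[OF pd_on_imp_psd_on[OF pd_imp_pd_on]])

lemma trace_eq_trace_prod: "trace (r ** X) = trace_prod (\<lambda>i j. r $ i $ j) (\<lambda>i j. X $ i $ j) UNIV"
  unfolding trace_def trace_prod_def matrix_matrix_mult_def by simp

lemma trace_mult_pd_psd_nonneg:
  assumes "pd r" "psd X"
  shows "0 \<le> trace (r ** X)"
  using trace_prod_pd_psd_nonneg_and_zero_diag[OF finite_class.finite_UNIV
      pd_imp_pd_on[OF assms(1)] psd_imp_psd_on[OF assms(2)]]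
  by (simp add: trace_eq_trace_prod)

lemma trace_mult_pd_psd_eq_0:
  assumes "pd r" "psd X" "trace (r ** X) = 0"
  shows "X = 0"
proof -
  have diag: "X $ i $ i = 0" for i
    using trace_prod_pd_psd_nonneg_and_zero_diag[OF finite_class.finite_UNIV
      pd_imp_pd_on[OF assms(1)] psd_imp_psd_on[OF assms(2)]]
      assms(3) by (simp add: trace_eq_trace_prod)
  have "X $ i $ j = 0" for i j
    using psd_on_zero_diag_imp_zero[OF finite_class.finite_UNIV psd_imp_psd_on[OF assms(2)], of i j] diag
    by simp
  then show ?thesis by (simp add: vec_eq_iff)
qed

lemma cadj_cadj [simp]: "cadj (cadj A) = A"
  by (simp add: cadj_def vec_eq_iff)

lemma cadj_add [simp]: "cadj (A + B) = cadj A + cadj B"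
  by (simp add: cadj_def vec_eq_iff)

lemma cadj_csmult [simp]: "cadj (csmult c A) = csmult (cnj c) (cadj A)"
  by (simp add: cadj_def csmult_def vec_eq_iff)

lemma cadj_mat_1 [simp]: "cadj (mat 1 :: 'n::finite cmat) = mat 1"
  by (simp add: cadj_def mat_def vec_eq_iff)

lemma cadj_mult [simp]: "cadj (A ** B) = cadj B ** cadj A"
  by (simp add: cadj_def matrix_matrix_mult_def vec_eq_iff mult.commute)

lemma csmult_add [simp]: "csmult c (A + B) = csmult c A + csmult c B"
  by (simp add: csmult_def vec_eq_iff algebra_simps)

lemma csmult_diff [simp]: "csmult c (A - B) = csmult c A - csmult c B"
  by (simp add: csmult_def vec_eq_iff algebra_simps)

lemma csmult_csmult [simp]: "csmult c (csmult d A) = csmult (c * d) A"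
  by (simp add: csmult_def vec_eq_iff)

lemma csmult_1 [simp]: "csmult 1 A = A"
  by (simp add: csmult_def vec_eq_iff)

lemma csmult_mult_left [simp]: "csmult c A ** B = csmult c (A ** B)"
  by (simp add: csmult_def matrix_matrix_mult_def vec_eq_iff sum_distrib_left mult.assoc)

lemma csmult_mult_right [simp]: "A ** csmult c B = csmult c (A ** B)"
  by (simp add: csmult_def matrix_matrix_mult_def vec_eq_iff sum_distrib_left algebra_simps)

lemma matrix_add_rdistrib: "(B + C) ** (A :: 'n::finite cmat) = B ** A + C ** A"
  by (simp add: matrix_matrix_mult_def vec_eq_iff sum.distrib distrib_right)

lemma clinear_map_add: "clinear_map f \<Longrightarrow> f (a + b) = f a + f b"
  by (simp add: clinear_map_def)

lemma clinear_map_csmult: "clinear_map f \<Longrightarrow> f (csmult c a) = csmult c (f a)"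
  by (simp add: clinear_map_def)

lemma clinear_map_0: "clinear_map f \<Longrightarrow> f 0 = 0"
  using clinear_map_add[of f 0 0] by simp

lemma clinear_map_sum:
  assumes "clinear_map f" "finite S"
  shows "f (\<Sum>x\<in>S. g x) = (\<Sum>x\<in>S. f (g x))"
  using assms(2)
  by (induction S rule: finite_induct) (simp_all add: clinear_map_0[OF assms(1)] clinear_map_add[OF assms(1)])

section \<open>Schwarz maps\<close>

definition schwarz_defect :: "('n::finite cmat \<Rightarrow> 'n cmat) \<Rightarrow> 'n cmat \<Rightarrow> 'n cmat" where
  "schwarz_defect f a = f (cadj a ** a) - cadj (f a) ** f a"

lemma unital_schwarz_defect_psd: "unital_schwarz f \<Longrightarrow> psd (schwarz_defect f a)"
  unfolding unital_schwarz_def loewner_ge_def schwarz_defect_def by blast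

lemma unital_schwarz_cadj:
  assumes "unital_schwarz \<phi>"
  shows "\<phi> (cadj b) = cadj (\<phi> b)"
proof -
  have lin: "clinear_map \<phi>" and unit: "\<phi> (mat 1) = mat 1"
    using assms unfolding unital_schwarz_def by auto
  define D where "D = \<phi> (cadj b) - cadj (\<phi> b)"
  define P where "P = schwarz_defect \<phi> b"
  \<comment> \<open>The defect at 1 + t b is hermitian for every t; t = 1 and t = \<i> force D = 0.\<close>
  have defect_shift: "schwarz_defect \<phi> (mat 1 + csmult t b) = csmult (cnj t) D + csmult (cnj t * t) P" for t
    unfolding schwarz_defect_def D_def P_def
    by (simp add: matrix_add_ldistrib matrix_add_rdistrib clinear_map_add[OF lin]
        clinear_map_csmult[OF lin] unit algebra_simps)
  have "csmult t (cadj D) = csmult (cnj t) D" for t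
    using psd_hermitian[OF unital_schwarz_defect_psd[OF assms], of "mat 1 + csmult t b"]
      psd_hermitian[OF unital_schwarz_defect_psd[OF assms], of b]
    unfolding defect_shift P_def by (simp add: mult.commute)
  from this[of 1] this[of \<i>] have "csmult \<i> D = csmult (- \<i>) D"
    by simp
  then have "D = 0"
    by (simp add: csmult_def vec_eq_iff)
  then show ?thesis
    unfolding D_def by simp
qed

section \<open>The Hilbert-Schmidt adjoint\<close>

lemma hs_inner_eq_sum: "hs_inner a b = (\<Sum>i\<in>UNIV. \<Sum>j\<in>UNIV. cnj (a $ i $ j) * b $ i $ j)"
  unfolding hs_inner_def trace_def cadj_def matrix_matrix_mult_def
  by (simp only: vec_lambda_beta) (rule sum.swap)

lemma hs_inner_csmult: "hs_inner a (csmult c b) = c * hs_inner a b"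
  by (simp add: hs_inner_eq_sum csmult_def sum_distrib_left algebra_simps)

lemma hs_inner_sum: "finite S \<Longrightarrow> hs_inner a (\<Sum>x\<in>S. g x) = (\<Sum>x\<in>S. hs_inner a (g x))"
  by (induction S rule: finite_induct) (simp_all add: hs_inner_eq_sum sum.distrib algebra_simps)

definition mat_unit :: "'n::finite \<Rightarrow> 'n \<Rightarrow> 'n cmat" where
  "mat_unit k l = (\<chi> i j. if i = k \<and> j = l then 1 else 0)"

lemma hs_inner_mat_unit: "hs_inner a (mat_unit k l) = cnj (a $ k $ l)"
proof -
  have "hs_inner a (mat_unit k l) =
      (\<Sum>i\<in>UNIV. if i = k then (\<Sum>j\<in>UNIV. if j = l then cnj (a $ i $ j) else 0) else 0)"
    unfolding hs_inner_eq_sum mat_unit_def by (intro sum.cong refl) (auto simp: if_distrib cong: if_cong)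
  then show ?thesis by simp
qed

lemma mat_unit_expansion: "b = (\<Sum>k\<in>UNIV. \<Sum>l\<in>UNIV. csmult (b $ k $ l) (mat_unit k l))"
proof -
  have "(\<Sum>k\<in>UNIV. \<Sum>l\<in>UNIV. csmult (b $ k $ l) (mat_unit k l)) $ i $ j =
      (\<Sum>k\<in>UNIV. if k = i then (\<Sum>l\<in>UNIV. if l = j then b $ k $ l else 0) else 0)" for i j
    unfolding sum_component csmult_def mat_unit_def
    by (intro sum.cong refl) (auto simp: if_distrib cong: if_cong)
  then show ?thesis by (simp add: vec_eq_iff)
qed

lemma hs_adjoint_eq:
  fixes f :: "'n::finite cmat \<Rightarrow> 'n cmat"
  assumes lin: "clinear_map f"
  shows "hs_inner a (f b) = hs_inner (hs_adjoint f a) b"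
proof -
  \<comment> \<open>hs_adjoint is a definite description, so both existence and uniqueness are needed.\<close>
  define P where "P = (\<lambda>g::'n cmat \<Rightarrow> 'n cmat. \<forall>a b. hs_inner a (f b) = hs_inner (g a) b)"
  define g0 where "g0 = (\<lambda>a::'n cmat. \<chi> k l. cnj (hs_inner a (f (mat_unit k l))))"
  have "P g0"
    unfolding P_def
  proof (intro allI)
    fix a b :: "'n cmat"
    have "f b = (\<Sum>k\<in>UNIV. \<Sum>l\<in>UNIV. csmult (b $ k $ l) (f (mat_unit k l)))"
      by (subst mat_unit_expansion) (simp add: clinear_map_sum[OF lin] clinear_map_csmult[OF lin])
    then have "hs_inner a (f b) = (\<Sum>k\<in>UNIV. \<Sum>l\<in>UNIV. b $ k $ l * hs_inner a (f (mat_unit k l)))"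
      by (simp add: hs_inner_sum hs_inner_csmult)
    also have "\<dots> = hs_inner (g0 a) b"
      by (simp add: hs_inner_eq_sum g0_def mult.commute)
    finally show "hs_inner a (f b) = hs_inner (g0 a) b" .
  qed
  moreover have "g = g0" if "P g" for g
  proof -
    have "hs_inner (g a) (mat_unit k l) = hs_inner (g0 a) (mat_unit k l)" for a k l
      using that \<open>P g0\<close> unfolding P_def by metis
    then show ?thesis
      by (simp add: hs_inner_mat_unit fun_eq_iff vec_eq_iff)
  qed
  ultimately have "P (hs_adjoint f)"
    unfolding hs_adjoint_def P_def[symmetric] by (rule theI)
  then show ?thesis
    unfolding P_def by blast
qed

section \<open>Iterates of a Schwarz map with an invariant state\<close>

lemma trace_invariant_if_adjoint_fixed:
  assumes "clinear_map f" "cadj \<rho> = \<rho>" "hs_adjoint f \<rho> = \<rho>"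
  shows "trace (\<rho> ** f x) = trace (\<rho> ** x)"
  using hs_adjoint_eq[OF assms(1), of \<rho> x] assms(2,3) by (simp add: hs_inner_def)

lemma trace_invariant_funpow:
  assumes "\<And>x. trace (\<rho> ** f x) = trace (\<rho> ** x)"
  shows "trace (\<rho> ** (f ^^ n) x) = trace (\<rho> ** x)"
  by (induction n) (simp_all add: assms)

lemma trace_mult_diff: "trace (r ** (X - Y)) = trace (r ** X) - trace (r ** (Y :: 'n::finite cmat))"
  by (simp add: trace_def matrix_matrix_mult_def sum_subtractf algebra_simps)

lemma trace_schwarz_defect_telescope:
  assumes "\<And>x. trace (\<rho> ** f x) = trace (\<rho> ** x)"
  shows "trace (\<rho> ** (cadj a ** a)) =
    trace (\<rho> ** (cadj ((f ^^ n) a) ** (f ^^ n) a)) + (\<Sum>k<n. trace (\<rho> ** schwarz_defect f ((f ^^ k) a)))"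
proof (induction n)
  case 0
  then show ?case by simp
next
  case (Suc n)
  have "trace (\<rho> ** (cadj ((f ^^ n) a) ** (f ^^ n) a)) =
      trace (\<rho> ** f (cadj ((f ^^ n) a) ** (f ^^ n) a))"
    by (simp add: assms)
  also have "\<dots> = trace (\<rho> ** (cadj ((f ^^ Suc n) a) ** (f ^^ Suc n) a))
      + trace (\<rho> ** schwarz_defect f ((f ^^ n) a))"
    by (simp add: schwarz_defect_def trace_mult_diff)
  finally show ?case
    using Suc.IH by simp
qed

lemma funpow_mult_if_schwarz_defects_vanish:
  assumes "\<And>k. k < n \<Longrightarrow> schwarz_defect f ((f ^^ k) a) = 0"
  shows "(f ^^ n) (cadj a ** a) = cadj ((f ^^ n) a) ** (f ^^ n) a"
  using assms
proof (induction n)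
  case 0
  then show ?case by simp
next
  case (Suc n)
  then have "(f ^^ Suc n) (cadj a ** a) = f (cadj ((f ^^ n) a) ** (f ^^ n) a)"
    by simp
  also have "\<dots> = cadj ((f ^^ Suc n) a) ** (f ^^ Suc n) a"
    using Suc.prems[of n] by (simp add: schwarz_defect_def)
  finally show ?case .
qed

lemma unital_schwarz_funpow_mult_iff_trace_eq:
  assumes "unital_schwarz f" "pd \<rho>" and inv: "\<And>x. trace (\<rho> ** f x) = trace (\<rho> ** x)"
  shows "(f ^^ n) (cadj a ** a) = cadj ((f ^^ n) a) ** (f ^^ n) a \<longleftrightarrow>
    trace (\<rho> ** (cadj a ** a)) = trace (\<rho> ** (cadj ((f ^^ n) a) ** (f ^^ n) a))"
proof
  assume "(f ^^ n) (cadj a ** a) = cadj ((f ^^ n) a) ** (f ^^ n) a"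
  then show "trace (\<rho> ** (cadj a ** a)) = trace (\<rho> ** (cadj ((f ^^ n) a) ** (f ^^ n) a))"
    using trace_invariant_funpow[OF inv, of n "cadj a ** a"] by simp
next
  let ?t = "\<lambda>k. trace (\<rho> ** schwarz_defect f ((f ^^ k) a))"
  have nonneg: "0 \<le> ?t k" for k
    by (rule trace_mult_pd_psd_nonneg[OF assms(2) unital_schwarz_defect_psd[OF assms(1)]])
  assume "trace (\<rho> ** (cadj a ** a)) = trace (\<rho> ** (cadj ((f ^^ n) a) ** (f ^^ n) a))"
  then have "(\<Sum>k<n. ?t k) = 0"
    using trace_schwarz_defect_telescope[OF inv, of a n] by simp
  then have "?t k = 0" if "k < n" for k
    using sum_nonneg_eq_0_iff[of "{..<n}" ?t] nonneg that by simp
  then have "schwarz_defect f ((f ^^ k) a) = 0" if "k < n" for k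
    using trace_mult_pd_psd_eq_0[OF assms(2) unital_schwarz_defect_psd[OF assms(1)]] that by blast
  then show "(f ^^ n) (cadj a ** a) = cadj ((f ^^ n) a) ** (f ^^ n) a"
    by (rule funpow_mult_if_schwarz_defects_vanish)
qed

theorem lemma3p1:
  fixes \<phi> :: "'n::finite cmat \<Rightarrow> 'n cmat" and \<rho> :: "'n cmat" and n :: nat
  assumes "unital_schwarz \<phi>"
    and "primitive_map \<phi>"
    and "pd \<rho>" and "trace \<rho> = 1" and "hs_adjoint \<phi> \<rho> = \<rho>"
  shows "mult_domain (\<phi> ^^ n) =
    {a. winner \<rho> a a = winner \<rho> ((\<phi> ^^ n) a) ((\<phi> ^^ n) a) \<and>
        winner \<rho> (cadj a) (cadj a) = winner \<rho> (cadj ((\<phi> ^^ n) a)) (cadj ((\<phi> ^^ n) a))}"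
proof -
  have lin: "clinear_map \<phi>"
    using assms(1) unfolding unital_schwarz_def by blast
  have inv: "trace (\<rho> ** \<phi> x) = trace (\<rho> ** x)" for x
    using trace_invariant_if_adjoint_fixed[OF lin pd_hermitian[OF assms(3)] assms(5)] .
  note mult_iff_trace_eq = unital_schwarz_funpow_mult_iff_trace_eq[OF assms(1,3) inv, of n]
  have funpow_cadj: "(\<phi> ^^ m) (cadj a) = cadj ((\<phi> ^^ m) a)" for m a
    by (induction m) (simp_all add: unital_schwarz_cadj[OF assms(1)])
  have winner_self: "winner \<rho> b b = trace (\<rho> ** (cadj b ** b))" for b
    unfolding winner_def by (simp add: matrix_mul_assoc)
  show ?thesis
    using mult_iff_trace_eq mult_iff_trace_eq[of "cadj _"]
    unfolding mult_domain_def winner_self by (auto simp: funpow_cadj)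
qed

end
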